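(* Let $P=\{p_1,\dots,p_n\}$ be weighted points in $\mathbb{R}^2$ with total weight $1$, let $S=\{s_1,\dots,s_m\}$ be line segments in $\mathbb{R}^2$ of total length $1$, let $0<\delta$, and let $Q$ be the set of subsegments obtained from $S$ by the subdivision procedure described in the context. Let $G$ be the complete bipartite graph on $P\cup Q$ in which each $p\in P$ has supply $\|p\|$, each $q\in Q$ has demand equal to its length $\|q\|$, and the cost of edge $(p,q)$ is the Euclidean distance from $p$ to the closest point of $q$. Then the earth mover's distance between $P$ and $Q$ is at least the cost $\|\mathcal{W}\|$ of a minimum cost flow $\mathcal{W}$ in $G$ (a flow sending all supply to satisfy all demands).
   Context: Mass of each segment equals its length and is spread uniformly over it with density one. A transport plan from $P$ to a set of segments assigns to each point $p$ and each point $x$ of the segments a density $\tau_p(x)\in[0,1]$ such that each point $p$ sends total mass $\|p\|$ and each point $x$ of the segments receives total density $1$; its cost is $\sum_p\int\tau_p(x)\,\|p-x\|_2\,dx$; the earth mover's distance is the infimum of costs. Subdivision procedure: repeatedly, for each current subsegment $s'$: if there is a point of $P$ such that all of $s'$ lies within Euclidean distance $\delta/(nm)$ of it, leave $s'$ as is; otherwise, if there is a point $p\in P$ for which the ratio between the largest and smallest distance from $p$ to points of $s'$ exceeds $1+\delta$, cut $s'$ into two halves. The final set of subsegments is $Q$. *)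

theory Defs
  imports "HOL-Analysis.Analysis"
begin

type_synonym pt = "real^2"
type_synonym seg = "pt \<times> pt"

definition seg_set :: "seg \<Rightarrow> pt set" where
  "seg_set s = closed_segment (fst s) (snd s)"

definition seg_len :: "seg \<Rightarrow> real" where
  "seg_len s = dist (fst s) (snd s)"

text \<open>Affine parametrisation over [0,1]; arclength element is seg_len s * dt.\<close>
definition seg_pt :: "seg \<Rightarrow> real \<Rightarrow> pt" where
  "seg_pt s t = fst s + t *\<^sub>R (snd s - fst s)"

text \<open>Weighted points: list of (position, weight). Transport plan: tau i k t is the
  density sent by point i to the point seg_pt (T!k) t of segment k.\<close>
definition transport_plan ::
  "(pt \<times> real) list \<Rightarrow> seg list \<Rightarrow> (nat \<Rightarrow> nat \<Rightarrow> real \<Rightarrow> real) \<Rightarrow> bool" where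
  "transport_plan P T tau \<longleftrightarrow>
     (\<forall>i<length P. \<forall>k<length T. (tau i k) integrable_on {0..1} \<and>
        (\<forall>t\<in>{0..1}. 0 \<le> tau i k t \<and> tau i k t \<le> 1)) \<and>
     (\<forall>i<length P. (\<Sum>k<length T. seg_len (T!k) * integral {0..1} (tau i k)) = snd (P!i)) \<and>
     (\<forall>k<length T. \<forall>t\<in>{0..1}. (\<Sum>i<length P. tau i k t) = 1)"

definition plan_cost ::
  "(pt \<times> real) list \<Rightarrow> seg list \<Rightarrow> (nat \<Rightarrow> nat \<Rightarrow> real \<Rightarrow> real) \<Rightarrow> real" where
  "plan_cost P T tau =
     (\<Sum>i<length P. \<Sum>k<length T.
        seg_len (T!k) * integral {0..1} (\<lambda>t. tau i k t * dist (fst (P!i)) (seg_pt (T!k) t)))"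

definition emd :: "(pt \<times> real) list \<Rightarrow> seg list \<Rightarrow> real" where
  "emd P T = Inf (plan_cost P T ` {tau. transport_plan P T tau})"

definition is_flow :: "(pt \<times> real) list \<Rightarrow> seg list \<Rightarrow> (nat \<Rightarrow> nat \<Rightarrow> real) \<Rightarrow> bool" where
  "is_flow P Q f \<longleftrightarrow>
     (\<forall>i<length P. \<forall>k<length Q. 0 \<le> f i k) \<and>
     (\<forall>i<length P. (\<Sum>k<length Q. f i k) = snd (P!i)) \<and>
     (\<forall>k<length Q. (\<Sum>i<length P. f i k) = seg_len (Q!k))"

definition flow_cost :: "(pt \<times> real) list \<Rightarrow> seg list \<Rightarrow> (nat \<Rightarrow> nat \<Rightarrow> real) \<Rightarrow> real" where
  "flow_cost P Q f = (\<Sum>i<length P. \<Sum>k<length Q. f i k * infdist (fst (P!i)) (seg_set (Q!k)))"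

definition is_min_cost_flow :: "(pt \<times> real) list \<Rightarrow> seg list \<Rightarrow> (nat \<Rightarrow> nat \<Rightarrow> real) \<Rightarrow> bool" where
  "is_min_cost_flow P Q f \<longleftrightarrow>
     is_flow P Q f \<and> (\<forall>g. is_flow P Q g \<longrightarrow> flow_cost P Q f \<le> flow_cost P Q g)"

text \<open>Subdivision procedure (Ps = point positions, eps = delta/(n m)).\<close>
definition seg_near :: "pt list \<Rightarrow> real \<Rightarrow> seg \<Rightarrow> bool" where
  "seg_near Ps eps s \<longleftrightarrow> (\<exists>p\<in>set Ps. \<forall>x\<in>seg_set s. dist p x \<le> eps)"

text \<open>ratio (largest distance)/(smallest distance) exceeds 1+delta
  (a zero smallest distance with positive largest distance counts as an infinite ratio).\<close>
definition seg_ratio_big :: "pt list \<Rightarrow> real \<Rightarrow> seg \<Rightarrow> bool" where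
  "seg_ratio_big Ps delta s \<longleftrightarrow>
     (\<exists>p\<in>set Ps. (SUP x\<in>seg_set s. dist p x) > (1 + delta) * (INF x\<in>seg_set s. dist p x))"

inductive subdiv :: "pt list \<Rightarrow> real \<Rightarrow> real \<Rightarrow> seg \<Rightarrow> seg list \<Rightarrow> bool"
  for Ps :: "pt list" and delta :: real and eps :: real where
  keep_near: "seg_near Ps eps s \<Longrightarrow> subdiv Ps delta eps s [s]"
| keep_flat: "\<not> seg_near Ps eps s \<Longrightarrow> \<not> seg_ratio_big Ps delta s \<Longrightarrow> subdiv Ps delta eps s [s]"
| split: "\<not> seg_near Ps eps (a, b) \<Longrightarrow> seg_ratio_big Ps delta (a, b) \<Longrightarrow>
    subdiv Ps delta eps (a, midpoint a b) L1 \<Longrightarrow> subdiv Ps delta eps (midpoint a b, b) L2 \<Longrightarrow>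
    subdiv Ps delta eps (a, b) (L1 @ L2)"

end

theory Submission
  imports Defs
begin

text \<open>Integrating a transport plan over each segment yields a flow in the bipartite graph, and
  this can only lower the cost, because every point of a segment is at least as far from p as
  the closest one. The bound then passes to the infimum, provided some transport plan exists:
  subdivision preserves total length, so the lengths of Q sum to 1 like the weights of P, and
  spreading each point's weight uniformly over all segments is a plan.\<close>

lemma subdiv_total_length:
  assumes "subdiv Ps delta eps s L"
  shows "sum_list (map seg_len L) = seg_len s"
  using assms
proof (induction rule: subdiv.induct)
  case (split a b L1 L2)
  then show ?case by (simp add: seg_len_def dist_midpoint)
qed auto

lemma subdiv_concat_total_length:
  assumes "list_all2 (subdiv Ps delta eps) S Ls"
  shows "sum_list (map seg_len (concat Ls)) = sum_list (map seg_len S)"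
  using assms by (induction rule: list_all2_induct) (auto simp: subdiv_total_length)

lemma seg_pt_in_seg_set: "t \<in> {0..1} \<Longrightarrow> seg_pt q t \<in> seg_set q"
  unfolding seg_set_def seg_pt_def closed_segment_def
  by (rule CollectI, rule exI[of _ t]) (auto simp: algebra_simps)

lemma integrable_mult_dist_seg_pt:
  fixes f :: "real \<Rightarrow> real"
  assumes "f integrable_on {0..1}" "\<forall>t\<in>{0..1}. 0 \<le> f t"
  shows "(\<lambda>t. f t * dist p (seg_pt q t)) integrable_on {0..1}"
proof -
  have f_abs: "f absolutely_integrable_on {0..1}"
    using assms by (intro nonnegative_absolutely_integrable_1) auto
  have cont: "continuous_on {0..1::real} (\<lambda>t. dist p (seg_pt q t))"
    unfolding seg_pt_def by (intro continuous_intros)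
  have "(\<lambda>t. dist p (seg_pt q t) * f t) absolutely_integrable_on {0..1}"
  proof (rule absolutely_integrable_bounded_measurable_product_real)
    show "(\<lambda>t. dist p (seg_pt q t)) \<in> borel_measurable (lebesgue_on {0..1})"
      by (rule continuous_imp_measurable_on_sets_lebesgue[OF cont]) auto
    show "bounded ((\<lambda>t. dist p (seg_pt q t)) ` {0..1})"
      by (intro compact_imp_bounded compact_continuous_image cont) auto
  qed (auto simp: f_abs)
  then show ?thesis
    by (auto dest: absolutely_integrable_on_def[THEN iffD1] simp: mult.commute)
qed

definition plan_flow :: "seg list \<Rightarrow> (nat \<Rightarrow> nat \<Rightarrow> real \<Rightarrow> real) \<Rightarrow> nat \<Rightarrow> nat \<Rightarrow> real" where
  "plan_flow Q tau i k = seg_len (Q!k) * integral {0..1} (tau i k)"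

lemma is_flow_plan_flow:
  assumes "transport_plan P Q tau"
  shows "is_flow P Q (plan_flow Q tau)"
  unfolding is_flow_def
proof (intro conjI allI impI)
  fix i k assume "i < length P" "k < length Q"
  with assms show "0 \<le> plan_flow Q tau i k"
    unfolding plan_flow_def transport_plan_def seg_len_def
    by (intro mult_nonneg_nonneg integral_nonneg) auto
next
  fix i assume "i < length P"
  with assms show "(\<Sum>k<length Q. plan_flow Q tau i k) = snd (P!i)"
    unfolding plan_flow_def transport_plan_def by auto
next
  fix k assume k: "k < length Q"
  have "(\<Sum>i<length P. integral {0..1} (tau i k)) = integral {0..1} (\<lambda>t. \<Sum>i<length P. tau i k t)"
    using assms k unfolding transport_plan_def by (subst integral_sum) auto
  also have "\<dots> = integral {0..1} (\<lambda>t::real. 1::real)"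
    using assms k unfolding transport_plan_def by (intro integral_cong) auto
  finally show "(\<Sum>i<length P. plan_flow Q tau i k) = seg_len (Q!k)"
    unfolding plan_flow_def by (simp add: sum_distrib_left[symmetric])
qed

lemma flow_cost_plan_flow_le:
  assumes "transport_plan P Q tau"
  shows "flow_cost P Q (plan_flow Q tau) \<le> plan_cost P Q tau"
  unfolding flow_cost_def plan_cost_def plan_flow_def mult.assoc
proof (intro sum_mono mult_left_mono)
  fix i k assume "i \<in> {..<length P}" "k \<in> {..<length Q}"
  then have int: "tau i k integrable_on {0..1}"
    and bnd: "\<forall>t\<in>{0..1}. 0 \<le> tau i k t"
    using assms unfolding transport_plan_def by auto
  let ?p = "fst (P!i)" and ?q = "Q!k"
  have "integral {0..1} (tau i k) * infdist ?p (seg_set ?q)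
      = integral {0..1} (\<lambda>t. tau i k t * infdist ?p (seg_set ?q))"
    by simp
  also have "\<dots> \<le> integral {0..1} (\<lambda>t. tau i k t * dist ?p (seg_pt ?q t))"
  proof (rule integral_le)
    show "(\<lambda>t. tau i k t * infdist ?p (seg_set ?q)) integrable_on {0..1}"
      using int by (rule integrable_on_mult_left)
    show "(\<lambda>t. tau i k t * dist ?p (seg_pt ?q t)) integrable_on {0..1}"
      using int bnd by (rule integrable_mult_dist_seg_pt)
    fix t :: real assume t: "t \<in> {0..1}"
    have "infdist ?p (seg_set ?q) \<le> dist ?p (seg_pt ?q t)"
      by (rule infdist_le[OF seg_pt_in_seg_set[OF t]])
    then show "tau i k t * infdist ?p (seg_set ?q) \<le> tau i k t * dist ?p (seg_pt ?q t)"
      using bnd t by (intro mult_left_mono) auto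
  qed
  finally show "integral {0..1} (tau i k) * infdist ?p (seg_set ?q)
      \<le> integral {0..1} (\<lambda>t. tau i k t * dist ?p (seg_pt ?q t))" .
qed (simp add: seg_len_def)

lemma min_cost_flow_le_plan_cost:
  assumes "is_min_cost_flow P Q W" "transport_plan P Q tau"
  shows "flow_cost P Q W \<le> plan_cost P Q tau"
proof -
  have "flow_cost P Q W \<le> flow_cost P Q (plan_flow Q tau)"
    using assms is_flow_plan_flow unfolding is_min_cost_flow_def by blast
  also have "\<dots> \<le> plan_cost P Q tau"
    using assms(2) by (rule flow_cost_plan_flow_le)
  finally show ?thesis .
qed

text \<open>Without a transport plan the infimum in the definition of emd would be the junk value
  Inf {} of the reals.\<close>

lemma min_cost_flow_le_emd:
  assumes "is_min_cost_flow P Q W" "transport_plan P Q tau"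
  shows "flow_cost P Q W \<le> emd P Q"
  unfolding emd_def
  using assms by (intro cInf_greatest) (auto intro: min_cost_flow_le_plan_cost)

lemma transport_plan_uniform:
  assumes nonneg: "\<forall>i<length P. 0 \<le> snd (P!i)"
    and weights: "(\<Sum>i<length P. snd (P!i)) = 1"
    and lengths: "(\<Sum>k<length Q. seg_len (Q!k)) = 1"
  shows "transport_plan P Q (\<lambda>i k t. snd (P!i))"
  unfolding transport_plan_def
proof (intro conjI allI impI ballI)
  fix i assume i: "i < length P"
  have "snd (P!i) \<le> (\<Sum>i<length P. snd (P!i))"
    using nonneg i by (intro member_le_sum) auto
  then show "snd (P!i) \<le> 1" using weights by simp
  show "(\<Sum>k<length Q. seg_len (Q!k) * integral {0..1} (\<lambda>t::real. snd (P!i))) = snd (P!i)"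
    using lengths by (simp add: sum_distrib_right[symmetric])
qed (use nonneg weights in auto)

theorem lemma1:
  fixes P :: "(pt \<times> real) list" and S :: "seg list" and delta :: real
    and Ls :: "seg list list" and Q :: "seg list" and W :: "nat \<Rightarrow> nat \<Rightarrow> real"
  assumes "\<forall>i<length P. 0 < snd (P!i)"
    and "(\<Sum>i<length P. snd (P!i)) = 1"
    and "(\<Sum>j<length S. seg_len (S!j)) = 1"
    and "0 < delta"
    and "list_all2 (subdiv (map fst P) delta (delta / (real (length P) * real (length S)))) S Ls"
    and "Q = concat Ls"
    and "is_min_cost_flow P Q W"
  shows "flow_cost P Q W \<le> emd P Q"
proof -
  have "(\<Sum>k<length Q. seg_len (Q!k)) = 1"
    using subdiv_concat_total_length[OF assms(5)] assms(3,6)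
    by (simp add: sum_list_sum_nth atLeast0LessThan)
  then have "transport_plan P Q (\<lambda>i k t. snd (P!i))"
    using assms(1,2) by (intro transport_plan_uniform) (auto simp: less_imp_le)
  with assms(7) show ?thesis by (rule min_cost_flow_le_emd)
qed

end
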